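(* Let $p$ be an odd prime, $m$ a positive integer, $q=p^m$, $u$ a positive integer and $v=\gcd(m,u)$. Let $\mathrm{Tr}$ denote the trace map from $\mathbb{F}_q$ to $\mathbb{F}_p$, $\zeta_p=e^{2\pi\sqrt{-1}/p}$, $\eta$ the quadratic multiplicative character of $\mathbb{F}_q$, and $G(\eta)=\sum_{x\in\mathbb{F}_q^*}\eta(x)\zeta_p^{\mathrm{Tr}(x)}$. Let \[ D_1=\{(x,y)\in\mathbb{F}_q^2\setminus\{(0,0)\} : \mathrm{Tr}(x+y^{p^u+1})=0\}, \] and $C_{D_1}=\{c(a,b)=(\mathrm{Tr}(ax+by))_{(x,y)\in D_1} : a,b\in\mathbb{F}_q\}$. If $\frac{m}{v}$ is odd and $v$ is even, then $C_{D_1}$ is a $[p^{2m-1}-1,2m]$ three-weight linear code over $\mathbb{F}_p$ whose weight distribution is: weight $0$ with multiplicity $1$; weight $(p-1)p^{2m-2}$ with multiplicity $p^{2m}-1-(p-1)p^m$; weight $(p-1)p^{2m-2}\left(1-\frac{G(\eta)}{q}\right)$ with multiplicity $(p-1)p^{m-1}\left(1+\frac{(p-1)G(\eta)}{q}\right)$; and weight $(p-1)p^{2m-2}\left(1+\frac{G(\eta)}{(p-1)q}\right)$ with multiplicity $(p-1)p^{m-1}\left(p-1-\frac{(p-1)G(\eta)}{q}\right)$.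
   Context: An $[n,k]$ linear code over $\mathbb{F}_p$ is a $k$-dimensional subspace of $\mathbb{F}_p^n$. The multiplicity of a weight $w$ is the number of codewords of Hamming weight $w$; a code is $t$-weight if exactly $t$ nonzero weights occur. *)

theory Defs
  imports "HOL-Analysis.Analysis"
begin

text \<open>Finite field F_q, q = p^m, modelled as a finite field type 'a with CARD('a) = p^m.
  The absolute trace Tr : F_q -> F_p is Tr(x) = sum_{i<m} x^(p^i); its values lie in the
  prime field, which we identify with the image of {0..p-1} under of_nat.\<close>

definition trace :: "nat \<Rightarrow> nat \<Rightarrow> 'a::field \<Rightarrow> 'a" where
  "trace p m x = (\<Sum>i<m. x ^ (p ^ i))"

definition trace_nat :: "nat \<Rightarrow> nat \<Rightarrow> 'a::field \<Rightarrow> nat" where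
  "trace_nat p m x = (THE k. k < p \<and> of_nat k = trace p m x)"

definition quad_char :: "'a::field \<Rightarrow> complex" where
  "quad_char x = (if x = 0 then 0 else if (\<exists>y. y ^ 2 = x) then 1 else -1)"

definition zeta :: "nat \<Rightarrow> complex" where
  "zeta p = exp (2 * of_real pi * \<i> / of_nat p)"

definition gauss_quad :: "nat \<Rightarrow> nat \<Rightarrow> 'a::{finite,field} itself \<Rightarrow> complex" where
  "gauss_quad p m _ = (\<Sum>x\<in>(UNIV - {0::'a}). quad_char x * zeta p ^ trace_nat p m x)"

definition D1 :: "nat \<Rightarrow> nat \<Rightarrow> nat \<Rightarrow> ('a::field \<times> 'a) set" where
  "D1 p m u = {(x, y). (x, y) \<noteq> (0, 0) \<and> trace p m (x + y ^ (p ^ u + 1)) = 0}"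

definition codeword :: "nat \<Rightarrow> nat \<Rightarrow> nat \<Rightarrow> 'a::field \<Rightarrow> 'a \<Rightarrow> ('a \<times> 'a \<Rightarrow> 'a)" where
  "codeword p m u a b = (\<lambda>(x, y). if (x, y) \<in> D1 p m u then trace p m (a * x + b * y) else 0)"

definition code_CD1 :: "nat \<Rightarrow> nat \<Rightarrow> nat \<Rightarrow> ('a::field \<times> 'a \<Rightarrow> 'a) set" where
  "code_CD1 p m u = {codeword p m u a b | a b. True}"

definition hweight :: "nat \<Rightarrow> nat \<Rightarrow> nat \<Rightarrow> ('a::field \<times> 'a \<Rightarrow> 'a) \<Rightarrow> nat" where
  "hweight p m u c = card {z \<in> D1 p m u. c z \<noteq> 0}"

end

theory Submission
  imports Defs "HOL-Computational_Algebra.Polynomial" "HOL-Number_Theory.Residues"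
begin

text \<open>Put \<open>Q y = Tr (y ^ (p ^ u + 1))\<close>. The weight of \<open>c(a, b)\<close> is \<open>|D\<^sub>1|\<close> minus the number of
  \<open>(x, y)\<close> with \<open>Tr x + Q y = 0\<close> and \<open>Tr (a x + b y) = 0\<close>. For \<open>a \<notin> \<bbbF>\<^sub>p\<close> the two conditions on
  \<open>x\<close> are independent, which gives the weight \<open>(p - 1) p ^ (2 m - 2)\<close>. For \<open>a \<in> \<bbbF>\<^sub>p\<^sup>*\<close> only
  the \<open>y\<close> with \<open>a Q y = Tr (b y)\<close> contribute; the polarisation \<open>L z = z ^ (p ^ u) + z ^ (p ^ (-u))\<close>
  of \<open>Q\<close> is bijective because \<open>m / v\<close> is odd, so completing the square turns this into the number
  of \<open>y\<close> with \<open>Q y = Q z\<^sub>0\<close>. Since \<open>v\<close> is even, \<open>(p ^ u + 1) / 2\<close> is odd and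
  \<open>y \<mapsto> y ^ ((p ^ u + 1) / 2)\<close> is a bijection, so \<open>Q\<close> has the same value distribution as
  \<open>Tr (y\<^sup>2)\<close>. As \<open>m\<close> is even, every element of \<open>\<bbbF>\<^sub>p\<close> is a square in \<open>\<bbbF>\<^sub>q\<close>, so
  \<open>Nsq t = #{y. Tr (y\<^sup>2) = t}\<close> is constant on \<open>\<bbbF>\<^sub>p\<^sup>*\<close>; the first two moments of \<open>Nsq\<close> determine
  it up to an integer \<open>g\<close> with \<open>p g\<^sup>2 = q / p\<close>, and the Gauss sum is \<open>G(\<eta>) = - p g\<close>.\<close>

lemma card_roots_monic_le:
  fixes R :: "'a::field poly"
  assumes "N > 0" "degree R < N"
  shows "card {x::'a. x ^ N + poly R x = 0} \<le> N"
proof -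
  let ?P = "Polynomial.monom 1 N + R"
  have deg: "degree ?P = N"
    using assms by (simp add: degree_add_eq_left degree_monom_eq)
  hence "?P \<noteq> 0" using assms(1) by auto
  hence "card {x. poly ?P x = 0} \<le> degree ?P" by (rule card_poly_roots_bound)
  thus ?thesis using deg by (simp add: poly_monom)
qed

lemma card_eq_sum_card_fibres:
  assumes "finite S" "finite T" "f ` S \<subseteq> T"
  shows "card S = (\<Sum>y\<in>T. card {x\<in>S. f x = y})"
proof -
  have "(\<Sum>y\<in>T. sum (\<lambda>_. 1::nat) {x \<in> S. f x = y}) = sum (\<lambda>_. 1) S"
    by (rule sum.group) (use assms in auto)
  thus ?thesis by simp
qed

lemma card_filter_eq_sum: "finite A \<Longrightarrow> card {x\<in>A. P x} = (\<Sum>x\<in>A. if P x then 1 else 0)"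
  using sum.inter_filter[of A "\<lambda>_. 1::nat" P] by simp

lemma sum_if_eq_card_mult: "finite A \<Longrightarrow> (\<Sum>x\<in>A. if P x then c else 0) = card {x\<in>A. P x} * (c::nat)"
  using sum.inter_filter[of A "\<lambda>_. c" P] by simp

lemma card_pairs_eq_sum:
  "card {(x::'b::finite, y::'c::finite). P x y} = (\<Sum>y\<in>UNIV. card {x. P x y})"
proof -
  have "{(x, y). P x y} = (\<lambda>(y, x). (x, y)) ` (SIGMA y:UNIV. {x. P x y})" by auto
  moreover have "inj_on (\<lambda>(y, x). (x, y)) (SIGMA y:UNIV. {x::'b. P x y})" by (auto simp: inj_on_def)
  ultimately have "card {(x, y). P x y} = card (SIGMA y:UNIV. {x::'b. P x y})" by (simp add: card_image)
  also have "\<dots> = (\<Sum>y\<in>UNIV. card {x. P x y})" by (rule card_SigmaI) auto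
  finally show ?thesis .
qed

lemma pred_mult_sum_powers: "(p::nat) > 0 \<Longrightarrow> (p - 1) * (\<Sum>i<n. p ^ i) = p ^ n - 1"
proof (induction n)
  case (Suc n)
  have "p ^ n \<ge> 1" using Suc.prems by simp
  then show ?case using Suc by (simp add: algebra_simps diff_mult_distrib)
qed simp

lemma even_sum_powers_odd: "odd (p::nat) \<Longrightarrow> even (\<Sum>i<2*n. p ^ i)"
proof (induction n)
  case (Suc n)
  have "(\<Sum>i<2*Suc n. p ^ i) = (\<Sum>i<2*n. p ^ i) + (p ^ (2*n) + p ^ Suc (2*n))" by simp
  moreover have "odd (p ^ (2*n))" "odd (p ^ Suc (2*n))" using Suc.prems by simp_all
  ultimately show ?case using Suc by simp
qed simp

lemma gcd_double_eq:
  fixes m u v :: nat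
  assumes v: "v = gcd m u" and "odd (m div v)" "m > 0"
  shows "gcd (2 * u) m = v"
proof -
  have "v dvd m" "v dvd u" unfolding v by simp_all
  then obtain m' u' where m': "m = v * m'" and u': "u = v * u'" by (auto elim!: dvdE)
  have "v > 0" using assms by simp
  have "odd m'" using assms(2) m' \<open>v > 0\<close> by simp
  have "coprime (m div v) (u div v)" using div_gcd_coprime[of m u] assms(3) v by simp
  hence "coprime m' u'" using m' u' \<open>v > 0\<close> by simp
  hence "coprime (2 * u') m'" using \<open>odd m'\<close> by (simp add: coprime_commute)
  moreover have "gcd (2 * u) m = v * gcd (2 * u') m'"
    using m' u' gcd_mult_distrib_nat[of v "2*u'" m'] by (simp add: ac_simps)
  ultimately show ?thesis by simp
qed

lemma odd_half_power_plus_one: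
  assumes "odd (p::nat)" "even u"
  shows "odd ((p ^ u + 1) div 2)"
proof -
  obtain r where r: "u = 2 * r" using assms(2) by blast
  have "odd (p ^ r)" using assms(1) by simp
  then obtain s where s: "p ^ r = 2 * s + 1" by (rule oddE)
  have "p ^ u = (2 * s + 1) ^ 2" using r s by (simp add: power_mult mult.commute)
  hence "(p ^ u + 1) div 2 = 2 * (s * s + s) + 1" by (simp add: power2_eq_square algebra_simps)
  thus ?thesis by simp
qed

section \<open>Finite fields of order \<open>p ^ m\<close>\<close>

locale prime_power_field =
  fixes p m :: nat and field_type :: "'a::{finite,field} itself"
  assumes p_prime: "prime p" and m_pos: "m > 0" and card_field: "CARD('a) = p ^ m"
begin

lemma p_gt_1: "p > 1" using p_prime prime_gt_1_nat by blast

lemma p_pow_pred: "p * p ^ (m - 1) = p ^ m"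
  using m_pos by (cases m) simp_all

lemma CHAR_eq: "CHAR('a) = p"
proof -
  have "CHAR('a) > 0" by (rule finite_imp_CHAR_pos) simp
  hence pr: "prime CHAR('a)" by (rule prime_CHAR_semidom)
  have "CHAR('a) dvd p ^ m" using CHAR_dvd_CARD[where 'a='a] card_field by simp
  hence "CHAR('a) dvd p" using pr prime_dvd_power by blast
  thus ?thesis using pr p_prime primes_dvd_imp_eq by blast
qed

lemma of_nat_eq_iff_mod: "(of_nat i = (of_nat j::'a)) \<longleftrightarrow> i mod p = j mod p"
  using of_nat_eq_iff_cong_CHAR[where 'a='a] CHAR_eq by (simp add: cong_def)

lemma frobenius_add: "((x::'a) + y) ^ (p ^ n) = x ^ (p ^ n) + y ^ (p ^ n)"
  by (rule freshmans_dream') (simp_all add: CHAR_eq p_prime)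

lemma frobenius_sum: "(\<Sum>i\<in>A. f i) ^ (p ^ n) = (\<Sum>i\<in>A. (f i :: 'a) ^ (p ^ n))"
  by (rule freshmans_dream_sum') (simp_all add: CHAR_eq p_prime)

lemma frobenius_minus: "(- (x::'a)) ^ (p ^ n) = - (x ^ (p ^ n))"
proof -
  have "(x + - x) ^ (p ^ n) = 0" using p_gt_1 by (simp add: power_0_left)
  thus ?thesis unfolding frobenius_add by (simp add: add_eq_0_iff)
qed

lemma frobenius_diff: "((x::'a) - y) ^ (p ^ n) = x ^ (p ^ n) - y ^ (p ^ n)"
  using frobenius_add[of x "-y" n] frobenius_minus[of y n] by simp

lemma power_power_p: "((x::'a) ^ (p ^ i)) ^ (p ^ j) = x ^ (p ^ (i + j))"
  by (simp add: power_mult[symmetric] power_add)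

lemma power_card_eq: "(x::'a) ^ (p ^ m) = x"
proof (cases "x = 0")
  case False
  let ?n = "CARD('a)"
  have "x * (\<Prod>y\<in>UNIV-{0}. x * y) = x * x ^ (?n - 1) * \<Prod>(UNIV-{0})"
    by (simp add: prod.distrib mult_ac)
  also have "x * x ^ (?n - 1) = x ^ Suc (?n - 1)" by (subst power_Suc) auto
  also have "Suc (?n - 1) = ?n" using finite_UNIV_card_ge_0[where ?'a = 'a] by simp
  also have "(\<Prod>y\<in>UNIV-{0}. x * y) = (\<Prod>y\<in>UNIV-{0}. y)"
    by (rule prod.reindex_bij_witness[of _ "\<lambda>y. y / x" "\<lambda>y. x * y"]) (use False in auto)
  finally show ?thesis using card_field by simp
qed (use m_pos p_gt_1 in auto)

lemma power_card_power_eq: "(x::'a) ^ (p ^ (m * k)) = x"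
proof (induction k)
  case (Suc k)
  have "x ^ (p ^ (m * Suc k)) = (x ^ (p ^ (m * k))) ^ (p ^ m)"
    by (simp add: power_add power_mult[symmetric] mult.commute)
  thus ?case using Suc power_card_eq by simp
qed simp

definition fixed_by :: "nat \<Rightarrow> 'a \<Rightarrow> bool" where
  "fixed_by n x \<longleftrightarrow> x ^ (p ^ n) = x"

lemma fixed_by_add: "fixed_by i x \<Longrightarrow> fixed_by j x \<Longrightarrow> fixed_by (i + j) x"
  unfolding fixed_by_def by (simp add: power_add power_mult)

lemma fixed_by_mult: "fixed_by i x \<Longrightarrow> fixed_by (i * k) x"
  by (induction k) (auto simp: fixed_by_def fixed_by_add[unfolded fixed_by_def] add.commute)

lemma fixed_by_diff: "fixed_by (i + j) x \<Longrightarrow> fixed_by j x \<Longrightarrow> fixed_by i x"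
  unfolding fixed_by_def by (metis power_power_p add.commute)

lemma fixed_by_mod: "fixed_by i x \<Longrightarrow> fixed_by j x \<Longrightarrow> fixed_by (i mod j) x"
  by (metis fixed_by_diff fixed_by_mult mod_mult_div_eq add.commute)

lemma fixed_by_gcd: "fixed_by i x \<Longrightarrow> fixed_by j x \<Longrightarrow> fixed_by (gcd i j) x"
proof (induction i j rule: gcd_nat_induct)
  case (step i j)
  then show ?case using fixed_by_mod by (metis gcd_red_nat)
qed simp

lemma fixed_by_m: "fixed_by m x"
  using power_card_eq unfolding fixed_by_def .

abbreviation Tr :: "'a \<Rightarrow> 'a" where "Tr \<equiv> trace p m"

definition Fp :: "'a set" where "Fp = {x. x ^ p = x}"

lemma trace_add: "Tr (x + y) = Tr x + Tr y"
  unfolding trace_def by (simp add: frobenius_add sum.distrib)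

lemma trace_minus: "Tr (- x) = - Tr x"
  unfolding trace_def by (simp add: frobenius_minus sum_negf)

lemma trace_diff: "Tr (x - y) = Tr x - Tr y"
  using trace_add[of x "-y"] trace_minus[of y] by simp

lemma trace_zero [simp]: "Tr 0 = 0"
  unfolding trace_def using p_gt_1 by (simp add: power_0_left)

lemma sum_frobenius_shift: "(\<Sum>i<m. (x::'a) ^ (p ^ Suc i)) = (\<Sum>i<m. x ^ (p ^ i))"
proof -
  have "(\<Sum>i<Suc m. x ^ (p ^ i)) = x ^ (p ^ 0) + (\<Sum>i<m. x ^ (p ^ Suc i))"
    by (rule sum.lessThan_Suc_shift)
  moreover have "(\<Sum>i<Suc m. x ^ (p ^ i)) = (\<Sum>i<m. x ^ (p ^ i)) + x ^ (p ^ m)" by simp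
  ultimately show ?thesis using power_card_eq by simp
qed

lemma trace_power_p: "Tr (x ^ p) = Tr x"
  unfolding trace_def using sum_frobenius_shift[of x]
  by (simp add: power_mult[symmetric] mult.commute)

lemma trace_frobenius: "Tr (x ^ (p ^ j)) = Tr x"
proof (induction j)
  case (Suc j)
  have "x ^ (p ^ Suc j) = (x ^ (p ^ j)) ^ p" by (simp add: power_mult[symmetric] mult.commute)
  then show ?case using Suc trace_power_p by simp
qed simp

lemma trace_in_Fp: "Tr x \<in> Fp"
  unfolding Fp_def trace_def using frobenius_sum[of "\<lambda>i. x ^ (p ^ i)" "{..<m}" 1] sum_frobenius_shift[of x]
  by (simp add: power_mult[symmetric] mult.commute)

lemma of_nat_in_Fp: "(of_nat n :: 'a) \<in> Fp"
proof (induction n)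
  case 0 then show ?case using p_gt_1 by (simp add: Fp_def)
next
  case (Suc n)
  have "(of_nat n + 1 :: 'a) ^ (p ^ 1) = of_nat n ^ (p ^ 1) + 1 ^ (p ^ 1)" by (rule frobenius_add)
  then show ?case using Suc by (simp add: Fp_def add.commute)
qed

lemma inj_on_of_nat_below_p: "inj_on (of_nat :: nat \<Rightarrow> 'a) {..<p}"
  by (auto simp: inj_on_def of_nat_eq_iff_mod)

lemma Fp_eq_image_of_nat: "Fp = (of_nat :: nat \<Rightarrow> 'a) ` {..<p}"
proof -
  have sub: "(of_nat :: nat \<Rightarrow> 'a) ` {..<p} \<subseteq> Fp" using of_nat_in_Fp by auto
  have "card {x::'a. x ^ p + poly [:0, -1:] x = 0} \<le> p"
    by (rule card_roots_monic_le) (use p_gt_1 in auto)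
  moreover have "{x::'a. x ^ p + poly [:0, -1:] x = 0} = Fp" by (auto simp: Fp_def)
  ultimately have "card Fp \<le> p" by simp
  thus ?thesis using sub inj_on_of_nat_below_p by (metis card_image card_lessThan card_seteq finite)
qed

lemma card_Fp: "card Fp = p"
  using inj_on_of_nat_below_p by (simp add: Fp_eq_image_of_nat card_image)

lemma Fp_power: "c \<in> Fp \<Longrightarrow> c ^ (p ^ n) = c"
proof (induction n)
  case (Suc n)
  have "c ^ (p ^ Suc n) = (c ^ (p ^ n)) ^ p" by (simp add: power_mult[symmetric] mult.commute)
  then show ?case using Suc by (simp add: Fp_def)
qed simp

lemma Fp_0: "0 \<in> Fp" using of_nat_in_Fp[of 0] by simp
lemma Fp_1: "1 \<in> Fp" using of_nat_in_Fp[of 1] by simp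
lemma Fp_minus: "a \<in> Fp \<Longrightarrow> - a \<in> Fp"
  using frobenius_minus[of a 1] by (simp add: Fp_def)
lemma Fp_diff: "a \<in> Fp \<Longrightarrow> b \<in> Fp \<Longrightarrow> a - b \<in> Fp"
  using frobenius_diff[of a b 1] by (simp add: Fp_def)
lemma Fp_mult: "a \<in> Fp \<Longrightarrow> b \<in> Fp \<Longrightarrow> a * b \<in> Fp"
  by (simp add: Fp_def power_mult_distrib)
lemma Fp_divide: "a \<in> Fp \<Longrightarrow> b \<in> Fp \<Longrightarrow> a / b \<in> Fp"
  by (simp add: Fp_def power_divide)

lemma card_Fp_nonzero: "card (Fp - {0}) = p - 1"
  using card_Fp Fp_0 by (simp add: card_Diff_singleton)

lemma trace_scale: "c \<in> Fp \<Longrightarrow> Tr (c * x) = c * Tr x"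
  unfolding trace_def by (simp add: power_mult_distrib Fp_power sum_distrib_left)

lemma m_ge_2_if_not_in_Fp: assumes "a \<notin> Fp" shows "m \<ge> 2"
proof (rule ccontr)
  assume "\<not> m \<ge> 2"
  hence "m = 1" using m_pos by simp
  hence "card Fp = card (UNIV :: 'a set)" using card_Fp card_field by simp
  hence "Fp = UNIV" by (simp add: card_subset_eq)
  thus False using assms by simp
qed

text \<open>The kernel of the trace is the root set of a polynomial of degree \<open>p ^ (m - 1)\<close>; since
  all nonempty fibres are translates of the kernel and they cover \<open>p ^ m\<close> elements, every
  fibre over \<open>Fp\<close> has exactly \<open>p ^ (m - 1)\<close> elements.\<close>

lemma card_trace_kernel_le: "card {x::'a. Tr x = 0} \<le> p ^ (m - 1)"
proof -
  let ?R = "(\<Sum>i<m-1. Polynomial.monom (1::'a) (p ^ i))"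
  have pos: "0 < p ^ (m - 1)" using p_gt_1 by simp
  have "degree ?R \<le> p ^ (m - 1) - 1"
  proof (rule degree_sum_le)
    fix i assume "i \<in> {..<m-1}"
    hence "p ^ i < p ^ (m - 1)" using p_gt_1 by (simp add: power_strict_increasing)
    thus "degree (Polynomial.monom (1::'a) (p ^ i)) \<le> p ^ (m - 1) - 1"
      using degree_monom_le[of "1::'a" "p^i"] by linarith
  qed simp
  hence "degree ?R < p ^ (m - 1)" using pos by linarith
  hence "card {x::'a. x ^ (p ^ (m - 1)) + poly ?R x = 0} \<le> p ^ (m - 1)"
    by (rule card_roots_monic_le[OF pos])
  moreover have "Tr x = x ^ (p ^ (m - 1)) + poly ?R x" for x
  proof -
    have "Tr x = (\<Sum>i<Suc (m - 1). x ^ (p ^ i))" unfolding trace_def using m_pos by simp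
    thus ?thesis by (simp add: poly_sum poly_monom)
  qed
  ultimately show ?thesis by simp
qed

lemma card_trace_fibre_le_kernel: "card {x::'a. Tr x = t} \<le> card {x::'a. Tr x = 0}"
proof (cases "\<exists>x0. Tr x0 = t")
  case True
  then obtain x0 where x0: "Tr x0 = t" by blast
  have "{x. Tr x = t} = (\<lambda>k. x0 + k) ` {x. Tr x = 0}"
  proof -
    have "x \<in> (\<lambda>k. x0 + k) ` {x. Tr x = 0}" if "Tr x = t" for x
    proof -
      have "x = x0 + (x - x0)" "Tr (x - x0) = 0" using x0 trace_diff that by auto
      thus ?thesis by blast
    qed
    thus ?thesis by (auto simp: trace_add x0)
  qed
  thus ?thesis by (simp add: card_image)
qed simp

lemma card_trace_fibre: assumes "t \<in> Fp" shows "card {x::'a. Tr x = t} = p ^ (m - 1)"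
proof -
  have le: "card {x::'a. Tr x = y} \<le> p ^ (m - 1)" for y
    using card_trace_fibre_le_kernel card_trace_kernel_le le_trans by blast
  have "p ^ m = (\<Sum>y\<in>Fp. card {x::'a. Tr x = y})"
    using card_eq_sum_card_fibres[of "UNIV::'a set" Fp Tr] trace_in_Fp card_field by auto
  hence "(\<Sum>y\<in>Fp. card {x::'a. Tr x = y}) = (\<Sum>y\<in>Fp. p ^ (m - 1))"
    using card_Fp p_pow_pred by (intro antisym) (simp_all add: sum_mono le)
  from sum_mono_inv[OF this] show ?thesis using le assms by auto
qed

lemma card_trace_scaled_fibre:
  assumes "d \<noteq> 0" "t \<in> Fp"
  shows "card {x::'a. Tr (d * x) = t} = p ^ (m - 1)"
proof -
  have "{x::'a. Tr (d * x) = t} = (\<lambda>y. y / d) ` {y. Tr y = t}"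
  proof (intro equalityI subsetI)
    fix x assume "x \<in> {x::'a. Tr (d * x) = t}"
    hence "d * x \<in> {y. Tr y = t}" "x = (d * x) / d" using assms(1) by auto
    thus "x \<in> (\<lambda>y. y / d) ` {y. Tr y = t}" by (rule rev_image_eqI)
  qed (use assms(1) in auto)
  moreover have "inj_on (\<lambda>y. y / d) {y. Tr y = t}" using assms(1) by (auto simp: inj_on_def)
  ultimately show ?thesis using card_trace_fibre[OF assms(2)] by (simp add: card_image)
qed

lemma card_trace_not_eq: assumes "t \<in> Fp" shows "card {x::'a. Tr x \<noteq> t} = p ^ m - p ^ (m - 1)"
proof -
  have "{x::'a. Tr x \<noteq> t} = UNIV - {x. Tr x = t}" by auto
  thus ?thesis using card_trace_fibre[OF assms] card_field by (simp add: card_Diff_subset)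
qed

lemma card_Fp_affine_solutions:
  assumes "s \<in> Fp" "t \<in> Fp" "c \<in> Fp" "d \<in> Fp"
  shows "card {l\<in>Fp. t - l * s = d - l * c} = (if s = c then (if t = d then p else 0) else 1)"
proof (cases "s = c")
  case True thus ?thesis using card_Fp by auto
next
  case False
  let ?l = "(t - d) / (s - c)"
  have "t - l * s = d - l * c \<longleftrightarrow> l = ?l" for l
    using False by (auto simp: field_simps)
  moreover have "?l \<in> Fp" using assms by (intro Fp_divide Fp_diff)
  ultimately have "{l\<in>Fp. t - l * s = d - l * c} = {?l}" by auto
  thus ?thesis using False by simp
qed

text \<open>Two independent trace conditions: double count the pairs \<open>(x, l)\<close> with \<open>l \<in> Fp\<close> and
  \<open>Tr ((a - l) x) = c2 - l c1\<close>.\<close>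

lemma card_trace_pair_fibre:
  assumes "a \<notin> Fp" "c1 \<in> Fp" "c2 \<in> Fp"
  shows "card {x::'a. Tr x = c1 \<and> Tr (a * x) = c2} = p ^ (m - 2)"
proof -
  let ?P = "p ^ (m - 1)"
  let ?N = "card {x::'a. Tr x = c1 \<and> Tr (a * x) = c2}"
  define S where "S l = {x::'a. Tr (a * x) - l * Tr x = c2 - l * c1}" for l
  have card_S: "card (S l) = ?P" if "l \<in> Fp" for l
  proof -
    have "S l = {x::'a. Tr ((a - l) * x) = c2 - l * c1}"
      unfolding S_def using that by (simp add: left_diff_distrib trace_diff trace_scale)
    moreover have "a - l \<noteq> 0" using assms(1) that by auto
    ultimately show ?thesis using assms that by (simp add: card_trace_scaled_fibre Fp_diff Fp_mult)
  qed
  have count_l: "card {l\<in>Fp. x \<in> S l} = (if Tr x = c1 \<and> Tr (a * x) = c2 then p else 0) + (if Tr x \<noteq> c1 then 1 else 0)" for x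
    using card_Fp_affine_solutions[of "Tr x" "Tr (a * x)" c1 c2] trace_in_Fp assms(2,3)
    unfolding S_def by simp
  have "p * ?P = (\<Sum>l\<in>Fp. card (S l))" using card_S card_Fp by simp
  also have "\<dots> = (\<Sum>l\<in>Fp. \<Sum>x\<in>UNIV. if x \<in> S l then 1 else 0)"
    using card_filter_eq_sum[of UNIV "\<lambda>x. x \<in> S _"] by simp
  also have "\<dots> = (\<Sum>x\<in>UNIV. card {l\<in>Fp. x \<in> S l})"
    by (subst sum.swap) (simp add: card_filter_eq_sum)
  also have "\<dots> = ?N * p + card {x::'a. Tr x \<noteq> c1} * 1"
    unfolding count_l sum.distrib using sum_if_eq_card_mult[of "UNIV::'a set"] by simp
  finally have "p * ?P = p * ?N + (p ^ m - ?P)"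
    using card_trace_not_eq[OF assms(2)] by simp
  moreover have "?P \<le> p ^ m" using p_gt_1 by (simp add: power_increasing)
  ultimately have "p * ?N = ?P" using p_pow_pred by linarith
  moreover have "m - 1 = Suc (m - 2)" using m_ge_2_if_not_in_Fp[OF assms(1)] by arith
  hence "?P = p * p ^ (m - 2)" by simp
  ultimately show ?thesis using p_gt_1 by simp
qed

end

section \<open>The quadratic form \<open>Tr (y ^ (p ^ u + 1))\<close>\<close>

locale three_weight_code = prime_power_field +
  fixes u v :: nat
  assumes p_odd: "odd p" and v_def: "v = gcd m u"
    and odd_m_div_v: "odd (m div v)" and even_v: "even v"
begin

lemma m_even: "even m" using even_v v_def gcd_dvd1 dvd_trans by blast
lemma u_even: "even u" using even_v v_def gcd_dvd2 dvd_trans by blast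
lemma m_ge_2: "m \<ge> 2" using m_even m_pos by presburger
lemma p_ge_3: "p \<ge> 3" using p_gt_1 p_odd by presburger

lemma two_neq_zero: "(2::'a) \<noteq> 0"
  using of_nat_eq_iff_mod[of 2 0] p_ge_3 by simp

lemma eq_minus_self_imp_zero: "(x::'a) = - x \<Longrightarrow> x = 0"
proof -
  assume "x = - x"
  hence "2 * x = 0" by (metis add.right_inverse mult_2)
  thus "x = 0" using two_neq_zero by simp
qed

definition half_exp :: nat where "half_exp = (p ^ u + 1) div 2"

lemma two_half_exp: "p ^ u + 1 = 2 * half_exp"
  using p_odd unfolding half_exp_def by simp

lemma odd_half_exp: "odd half_exp"
  unfolding half_exp_def using odd_half_power_plus_one[OF p_odd u_even] .

definition Q :: "'a \<Rightarrow> 'a" where "Q y = Tr (y ^ (p ^ u + 1))"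

lemma Q_zero [simp]: "Q 0 = 0" unfolding Q_def by simp

text \<open>This is where \<open>m / v\<close> odd enters: it makes \<open>gcd (2 u) m = v\<close>, which divides \<open>u\<close>.\<close>

lemma fixed_by_2u_imp_fixed_by_u: "fixed_by (2 * u) x \<Longrightarrow> fixed_by u x"
proof -
  assume "fixed_by (2 * u) x"
  hence "fixed_by v x"
    using fixed_by_gcd[of "2*u" x m] fixed_by_m gcd_double_eq[OF v_def odd_m_div_v m_pos] by simp
  hence "fixed_by (v * (u div v)) x" by (rule fixed_by_mult)
  thus "fixed_by u x" using v_def by simp
qed

text \<open>\<open>L z = z ^ (p ^ u) + z ^ (p ^ (-u))\<close> is the polarisation of \<open>Q\<close> with respect to the trace
  form; the exponent \<open>p ^ (m u - u)\<close> realises the inverse Frobenius power \<open>p ^ (-u)\<close>.\<close>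

definition L :: "'a \<Rightarrow> 'a" where "L z = z ^ (p ^ u) + z ^ (p ^ (m * u - u))"

lemma u_plus_inverse_exp: "u + (m * u - u) = m * u"
  using m_pos by (cases m) auto

lemma trace_adjoint: "Tr (y ^ (p ^ u) * z) = Tr (y * z ^ (p ^ (m * u - u)))"
proof -
  have "Tr (y ^ (p ^ u) * z) = Tr ((y ^ (p ^ u) * z) ^ (p ^ (m * u - u)))" by (simp only: trace_frobenius)
  also have "(y ^ (p ^ u) * z) ^ (p ^ (m * u - u)) = (y ^ (p ^ u)) ^ (p ^ (m * u - u)) * z ^ (p ^ (m * u - u))"
    by (simp add: power_mult_distrib)
  also have "(y ^ (p ^ u)) ^ (p ^ (m * u - u)) = y"
    by (simp only: power_power_p u_plus_inverse_exp power_card_power_eq)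
  finally show ?thesis .
qed

lemma Q_add: "Q (y + z) = Q y + Q z + Tr (y * L z)"
proof -
  have "(y + z) ^ (p ^ u + 1) = (y ^ (p ^ u) + z ^ (p ^ u)) * (y + z)" by (simp add: frobenius_add)
  also have "\<dots> = y ^ (p ^ u + 1) + z ^ (p ^ u + 1) + (y ^ (p ^ u) * z + y * z ^ (p ^ u))"
    by (simp add: algebra_simps)
  finally have "Q (y + z) = Q y + Q z + (Tr (y ^ (p ^ u) * z) + Tr (y * z ^ (p ^ u)))"
    unfolding Q_def by (simp add: trace_add)
  also have "Tr (y ^ (p ^ u) * z) + Tr (y * z ^ (p ^ u)) = Tr (y * L z)"
    unfolding L_def trace_adjoint by (simp add: trace_add[symmetric] algebra_simps)
  finally show ?thesis .
qed

lemma L_diff: "L (y - z) = L y - L z"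
  unfolding L_def by (simp add: frobenius_diff)

text \<open>If \<open>L z = 0\<close> then \<open>z ^ (p ^ (2 u)) = - z\<close>, so \<open>z\<^sup>2\<close> is fixed by \<open>p ^ (2 u)\<close>, hence by \<open>p ^ u\<close>;
  then \<open>z ^ (p ^ u) = \<plusminus> z\<close>, both of which force \<open>z = - z\<close>.\<close>

lemma L_eq_0_imp_eq_0: assumes "L z = 0" shows "z = 0"
proof -
  have a: "z ^ (p ^ (m * u - u)) = - (z ^ (p ^ u))"
    using assms unfolding L_def by (simp add: eq_neg_iff_add_eq_0 add.commute)
  have "(z ^ (p ^ (m * u - u))) ^ (p ^ u) = z"
    by (simp only: power_power_p add.commute[of "m*u-u"] u_plus_inverse_exp power_card_power_eq)
  moreover have "(- (z ^ (p ^ u))) ^ (p ^ u) = - (z ^ (p ^ (2 * u)))"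
    by (simp only: frobenius_minus power_power_p mult_2)
  ultimately have twice: "z ^ (p ^ (2 * u)) = - z" using a by (metis minus_minus)
  have "(z ^ 2) ^ (p ^ (2 * u)) = (z ^ (p ^ (2 * u))) ^ 2" by (simp add: power_mult[symmetric] mult.commute)
  hence "fixed_by (2 * u) (z ^ 2)" using twice unfolding fixed_by_def by simp
  hence "fixed_by u (z ^ 2)" by (rule fixed_by_2u_imp_fixed_by_u)
  hence "(z ^ (p ^ u)) ^ 2 = z ^ 2"
    unfolding fixed_by_def by (simp add: power_mult[symmetric] mult.commute)
  hence "z ^ (p ^ u) = z \<or> z ^ (p ^ u) = - z" by (simp add: power2_eq_iff)
  moreover have "z ^ (p ^ (2 * u)) = (z ^ (p ^ u)) ^ (p ^ u)" by (simp only: power_power_p mult_2)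
  ultimately have "z ^ (p ^ (2 * u)) = z" by (auto simp: frobenius_minus)
  hence "z = - z" using twice by simp
  thus ?thesis by (rule eq_minus_self_imp_zero)
qed

lemma inj_L: "inj L"
proof (rule injI)
  fix y z assume "L y = L z"
  hence "L (y - z) = 0" by (simp add: L_diff)
  thus "y = z" using L_eq_0_imp_eq_0[of "y - z"] by simp
qed

lemma bij_L: "bij L" using inj_L finite_UNIV_inj_surj[of L] by (simp add: bij_def)

text \<open>A \<open>half_exp\<close>-th root of unity \<open>w\<close> satisfies \<open>w ^ (p ^ u) = 1 / w\<close>, so it is fixed by
  \<open>p ^ (2 u)\<close>, hence by \<open>p ^ u\<close>; thus \<open>w\<^sup>2 = 1\<close>, and \<open>w = 1\<close> because \<open>half_exp\<close> is odd.\<close>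

lemma inj_power_half_exp: "inj (\<lambda>y::'a. y ^ half_exp)"
proof (rule injI)
  fix y z :: 'a assume yz: "y ^ half_exp = z ^ half_exp"
  have pos: "half_exp > 0" using odd_half_exp by presburger
  show "y = z"
  proof (cases "z = 0")
    case True thus ?thesis using yz pos by (simp add: power_0_left)
  next
    case False
    define w where "w = y / z"
    have w1: "w ^ half_exp = 1" unfolding w_def using yz False by (simp add: power_divide)
    hence w0: "w \<noteq> 0" using pos by (metis zero_power zero_neq_one)
    have "w ^ (p ^ u + 1) = 1" unfolding two_half_exp mult.commute[of 2] power_mult using w1 by simp
    hence wi: "w ^ (p ^ u) = 1 / w" using w0 by (simp add: field_simps)
    have "w ^ (p ^ (2 * u)) = (w ^ (p ^ u)) ^ (p ^ u)" by (simp only: power_power_p mult_2)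
    also have "\<dots> = w" using wi w0 by (simp add: power_divide)
    finally have "fixed_by u w" using fixed_by_2u_imp_fixed_by_u unfolding fixed_by_def by blast
    hence "w * w = 1" using wi w0 unfolding fixed_by_def by (simp add: field_simps)
    hence "w = 1 \<or> w = -1" using power2_eq_iff[of w 1] by (simp add: power2_eq_square)
    moreover have "w \<noteq> -1"
      using w1 odd_half_exp eq_minus_self_imp_zero[of 1] by auto
    ultimately have "w = 1" by blast
    thus ?thesis unfolding w_def using False by simp
  qed
qed

lemma Q_eq_trace_square: "Q y = Tr ((y ^ half_exp) ^ 2)"
  unfolding Q_def two_half_exp by (simp add: power_mult[symmetric] mult.commute)

lemma card_Q_fibre: "card {y. Q y = t} = card {y::'a. Tr (y ^ 2) = t}"
proof -
  have "surj (\<lambda>y::'a. y ^ half_exp)" using finite_UNIV_inj_surj[OF _ inj_power_half_exp] by simp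
  hence "card ((\<lambda>y. y ^ half_exp) -` {y::'a. Tr (y ^ 2) = t}) = card {y::'a. Tr (y ^ 2) = t}"
    by (intro card_vimage_inj[OF inj_power_half_exp]) auto
  moreover have "(\<lambda>y. y ^ half_exp) -` {y::'a. Tr (y ^ 2) = t} = {y. Q y = t}"
    by (auto simp: Q_eq_trace_square)
  ultimately show ?thesis by simp
qed

section \<open>The values of \<open>Tr (y\<^sup>2)\<close> and the quadratic Gauss sum\<close>

definition Nsq :: "'a \<Rightarrow> nat" where "Nsq t = card {y::'a. Tr (y ^ 2) = t}"

lemma half_card_units_eq: "(p ^ m - 1) div 2 = (p - 1) * ((\<Sum>i<m. p ^ i) div 2)"
proof -
  have "even (\<Sum>i<m. p ^ i)" using even_sum_powers_odd[OF p_odd, of "m div 2"] m_even by simp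
  then obtain h where "(\<Sum>i<m. p ^ i) = 2 * h" by blast
  thus ?thesis using pred_mult_sum_powers[of p m] p_gt_1 by simp
qed

lemma Fp_nonzero_power_half_card: assumes "c \<in> Fp" "c \<noteq> 0" shows "c ^ ((p ^ m - 1) div 2) = 1"
proof -
  have "c * c ^ (p - 1) = c * 1"
    using assms(1) p_gt_1 by (simp add: Fp_def flip: power_Suc)
  hence "c ^ (p - 1) = 1" using assms(2) by simp
  thus ?thesis unfolding half_card_units_eq power_mult by simp
qed

lemma card_square_roots_nonzero:
  assumes "r \<noteq> (0::'a)" shows "card {y\<in>UNIV - {0}. y ^ 2 = r ^ 2} = 2"
proof -
  have "{y\<in>UNIV - {0}. y ^ 2 = r ^ 2} = {r, -r}" using assms by (auto simp: power2_eq_iff)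
  moreover have "r \<noteq> - r" using assms eq_minus_self_imp_zero by blast
  ultimately show ?thesis by simp
qed

lemma card_nonzero_squares: "card ((\<lambda>y::'a. y ^ 2) ` (UNIV - {0})) = (p ^ m - 1) div 2"
proof -
  let ?Sq = "(\<lambda>y::'a. y ^ 2) ` (UNIV - {0})"
  have "card (UNIV - {0::'a}) = (\<Sum>s\<in>?Sq. card {y\<in>UNIV - {0}. y ^ 2 = s})"
    by (rule card_eq_sum_card_fibres) auto
  also have "\<dots> = (\<Sum>s\<in>?Sq. 2)"
  proof (rule sum.cong[OF refl])
    fix s assume "s \<in> ?Sq"
    then obtain r where "r \<noteq> 0" "s = r ^ 2" by auto
    thus "card {y\<in>UNIV - {0}. y ^ 2 = s} = 2" using card_square_roots_nonzero by simp
  qed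
  finally have "p ^ m - 1 = card ?Sq * 2" using card_field by (simp add: card_Diff_subset)
  thus ?thesis by simp
qed

text \<open>The nonzero squares are exactly the roots of \<open>x ^ ((q - 1) / 2) = 1\<close>, and every nonzero
  element of \<open>Fp\<close> is such a root because \<open>p - 1\<close> divides \<open>(q - 1) / 2\<close> for even \<open>m\<close>.\<close>

lemma Fp_square: assumes "c \<in> Fp" shows "\<exists>r::'a. r ^ 2 = c"
proof (cases "c = 0")
  case True thus ?thesis by (intro exI[of _ 0]) simp
next
  case False
  let ?M = "(p ^ m - 1) div 2"
  let ?Sq = "(\<lambda>y::'a. y ^ 2) ` (UNIV - {0})"
  have "p ^ 1 \<le> p ^ m" using m_pos p_gt_1 by (intro power_increasing) auto
  hence q3: "p ^ m \<ge> 3" using p_ge_3 by simp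
  have sub: "?Sq \<subseteq> {x. x ^ ?M = 1}"
  proof
    fix x assume "x \<in> ?Sq"
    then obtain y where y: "y \<noteq> 0" "x = y ^ 2" by auto
    obtain n where n: "p ^ m = Suc n" using q3 by (cases "p ^ m") auto
    have "y * y ^ n = y * 1" using power_card_eq[of y] unfolding n by simp
    hence "y ^ (p ^ m - 1) = 1" using y(1) n by simp
    moreover have "p ^ m - 1 = 2 * ?M" using p_odd by simp
    ultimately show "x \<in> {x. x ^ ?M = 1}" using y(2) by (simp flip: power_mult)
  qed
  have "card {x::'a. x ^ ?M + poly [:-1:] x = 0} \<le> ?M"
    by (rule card_roots_monic_le) (use q3 in auto)
  moreover have "{x::'a. x ^ ?M + poly [:-1:] x = 0} = {x. x ^ ?M = 1}" by auto
  ultimately have "?Sq = {x. x ^ ?M = 1}"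
    using card_seteq[OF _ sub] card_nonzero_squares by simp
  moreover have "c \<in> {x. x ^ ?M = 1}" using Fp_nonzero_power_half_card[OF assms False] by simp
  ultimately have "c \<in> ?Sq" by simp
  thus ?thesis by blast
qed

lemma Nsq_Fp_nonzero: assumes "c \<in> Fp" "c \<noteq> 0" shows "Nsq c = Nsq 1"
proof -
  obtain r where r: "r ^ 2 = c" using Fp_square[OF assms(1)] by blast
  have r0: "r \<noteq> 0" using r assms(2) by auto
  have scale: "Tr ((r * y) ^ 2) = c * Tr (y ^ 2)" for y
    using trace_scale[OF assms(1)] r by (simp add: power_mult_distrib)
  have "{y. Tr (y ^ 2) = c} = (\<lambda>y. r * y) ` {y. Tr (y ^ 2) = 1}"
  proof (intro equalityI subsetI)
    fix x assume x: "x \<in> {y. Tr (y ^ 2) = c}"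
    have "c * Tr ((x / r) ^ 2) = c" using scale[of "x / r"] x r0 by simp
    hence "x / r \<in> {y. Tr (y ^ 2) = 1}" using assms(2) by simp
    moreover have "x = r * (x / r)" using r0 by simp
    ultimately show "x \<in> (\<lambda>y. r * y) ` {y. Tr (y ^ 2) = 1}" by (rule rev_image_eqI)
  qed (auto simp: scale)
  moreover have "inj_on (\<lambda>y. r * y) {y. Tr (y ^ 2) = 1}" using r0 by (auto simp: inj_on_def)
  ultimately show ?thesis unfolding Nsq_def by (simp add: card_image)
qed

lemma sum_Nsq: "(\<Sum>t\<in>Fp. Nsq t) = p ^ m"
proof -
  have "range (\<lambda>y::'a. Tr (y ^ 2)) \<subseteq> Fp" using trace_in_Fp by auto
  thus ?thesis
    unfolding Nsq_def using card_eq_sum_card_fibres[of "UNIV::'a set" Fp "\<lambda>y. Tr (y ^ 2)"] card_field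
    by simp
qed

lemma card_trace_product_zero:
  "card {(s::'a, w). Tr (s * w) = 0} = p ^ m + (p ^ m - 1) * p ^ (m - 1)"
proof -
  have "card {(s::'a, w). Tr (s * w) = 0} = (\<Sum>w\<in>UNIV. card {s::'a. Tr (s * w) = 0})"
    by (rule card_pairs_eq_sum)
  also have "\<dots> = card {s::'a. Tr (s * 0) = 0} + (\<Sum>w\<in>UNIV - {0}. card {s::'a. Tr (s * w) = 0})"
    by (rule sum.remove) auto
  also have "(\<Sum>w\<in>UNIV - {0}. card {s::'a. Tr (s * w) = 0}) = (\<Sum>w\<in>UNIV - {0::'a}. p ^ (m - 1))"
  proof (rule sum.cong[OF refl])
    fix w :: 'a assume "w \<in> UNIV - {0}"
    hence "card {s::'a. Tr (w * s) = 0} = p ^ (m - 1)" using card_trace_scaled_fibre Fp_0 by simp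
    thus "card {s::'a. Tr (s * w) = 0} = p ^ (m - 1)" by (simp add: mult.commute)
  qed
  finally show ?thesis using card_field by (simp add: card_Diff_subset)
qed

text \<open>\<open>(y, z) \<mapsto> (y - z, y + z)\<close> is a bijection since \<open>p\<close> is odd, and \<open>y\<^sup>2 - z\<^sup>2 = (y - z)(y + z)\<close>.\<close>

lemma card_equal_square_traces:
  "card {(y::'a, z). Tr (y ^ 2) = Tr (z ^ 2)} = card {(s::'a, w). Tr (s * w) = 0}"
proof -
  let ?S = "{(y::'a, z). Tr (y ^ 2) = Tr (z ^ 2)}"
  let ?phi = "\<lambda>(y::'a, z::'a). (y - z, y + z)"
  have inj: "inj ?phi"
  proof (rule injI, clarsimp)
    fix y z y' z' :: 'a assume a: "y - z = y' - z'" "y + z = y' + z'"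
    hence "2 * y = 2 * y'" by (metis add_diff_cancel_left' add_diff_eq diff_add_cancel mult_2)
    hence "y = y'" using two_neq_zero by simp
    thus "y = y' \<and> z = z'" using a by simp
  qed
  have diffsq: "Tr (y ^ 2) - Tr (z ^ 2) = Tr ((y - z) * (y + z))" for y z :: 'a
    by (simp add: trace_diff[symmetric] power2_eq_square algebra_simps)
  have img: "?phi ` ?S = {(s, w). Tr (s * w) = 0}"
  proof (intro equalityI subsetI)
    fix x assume "x \<in> ?phi ` ?S"
    then obtain y z where "Tr (y ^ 2) = Tr (z ^ 2)" "x = (y - z, y + z)" by auto
    thus "x \<in> {(s, w). Tr (s * w) = 0}" using diffsq[of y z] by simp
  next
    fix x assume "x \<in> {(s::'a, w). Tr (s * w) = 0}"
    then obtain s w where sw: "x = (s, w)" "Tr (s * w) = 0" by auto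
    let ?y = "(s + w) / 2" and ?z = "(w - s) / 2"
    have "(4::'a) = 2 * 2" by simp
    hence "(4::'a) \<noteq> 0" using two_neq_zero by (metis mult_eq_0_iff)
    hence e: "?y - ?z = s" "?y + ?z = w" using two_neq_zero by (simp_all add: field_simps)
    hence "(?y, ?z) \<in> ?S" using diffsq[of ?y ?z] sw(2) by simp
    moreover have "x = ?phi (?y, ?z)" using e sw(1) by simp
    ultimately show "x \<in> ?phi ` ?S" by (rule rev_image_eqI)
  qed
  have "card (?phi ` ?S) = card ?S" by (rule card_image[OF inj_on_subset[OF inj subset_UNIV]])
  thus ?thesis unfolding img by simp
qed

lemma sum_Nsq_squared: "(\<Sum>t\<in>Fp. (Nsq t) ^ 2) = p ^ m + (p ^ m - 1) * p ^ (m - 1)"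
proof -
  let ?S = "{(y::'a, z). Tr (y ^ 2) = Tr (z ^ 2)}"
  have "card ?S = (\<Sum>t\<in>Fp. card {x\<in>?S. (\<lambda>(y, z). Tr (y ^ 2)) x = t})"
    by (rule card_eq_sum_card_fibres) (auto simp: trace_in_Fp)
  also have "\<dots> = (\<Sum>t\<in>Fp. (Nsq t) ^ 2)"
  proof (rule sum.cong[OF refl])
    fix t
    have "{x\<in>?S. (\<lambda>(y, z). Tr (y ^ 2)) x = t} = {y. Tr (y ^ 2) = t} \<times> {z. Tr (z ^ 2) = t}" by auto
    thus "card {x\<in>?S. (\<lambda>(y, z). Tr (y ^ 2)) x = t} = (Nsq t) ^ 2"
      unfolding Nsq_def by (simp add: card_cartesian_product power2_eq_square)
  qed
  finally show ?thesis using card_equal_square_traces card_trace_product_zero by simp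
qed

definition q_div_p :: nat where "q_div_p = p ^ (m - 1)"

text \<open>\<open>Nsq\<close> equals \<open>q_div_p + g\<close> on \<open>Fp - {0}\<close> and \<open>q_div_p - (p - 1) g\<close> at \<open>0\<close>; in the end
  \<open>G(\<eta>) = - p g\<close>.\<close>

definition g :: int where "g = int (Nsq 1) - int q_div_p"

lemma p_mult_q_div_p: "p * q_div_p = p ^ m" unfolding q_div_p_def by (rule p_pow_pred)

lemma q_div_p_ge_p: "q_div_p \<ge> p"
  unfolding q_div_p_def using m_ge_2 p_gt_1 power_increasing[of 1 "m - 1" p] by simp

lemma sum_Fp_Nsq: "(\<Sum>t\<in>Fp. f (Nsq t)) = f (Nsq 0) + of_nat (p - 1) * (f (Nsq 1) :: 'b::comm_ring_1)"
proof -
  have "(\<Sum>t\<in>Fp. f (Nsq t)) = f (Nsq 0) + (\<Sum>t\<in>Fp - {0}. f (Nsq t))"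
    by (rule sum.remove) (simp_all add: Fp_0)
  also have "(\<Sum>t\<in>Fp - {0}. f (Nsq t)) = (\<Sum>t\<in>Fp - {0}. f (Nsq 1))"
    by (rule sum.cong) (auto simp: Nsq_Fp_nonzero)
  finally show ?thesis using card_Fp_nonzero by simp
qed

lemma Nsq_1: "int (Nsq 1) = int q_div_p + g" unfolding g_def by simp

lemma Nsq_0: "int (Nsq 0) = int q_div_p - (int p - 1) * g"
proof -
  have "(\<Sum>t\<in>Fp. int (Nsq t)) = int p * int q_div_p"
    using sum_Nsq p_mult_q_div_p by (metis of_nat_mult of_nat_sum)
  hence "int (Nsq 0) + int (p - 1) * int (Nsq 1) = int p * int q_div_p"
    using sum_Fp_Nsq[of int] by simp
  thus ?thesis using Nsq_1 p_gt_1 by (simp add: of_nat_diff algebra_simps)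
qed

lemma p_mult_g_squared: "int p * g ^ 2 = int q_div_p"
proof -
  have "p ^ m + (p ^ m - 1) * p ^ (m - 1) = p * q_div_p + (p * q_div_p - 1) * q_div_p"
    unfolding q_div_p_def using p_pow_pred by simp
  moreover have "p * q_div_p \<ge> 1" using p_gt_1 p_mult_q_div_p by simp
  ultimately have "(\<Sum>t\<in>Fp. (int (Nsq t)) ^ 2) = int p * int q_div_p + (int p * int q_div_p - 1) * int q_div_p"
    using arg_cong[OF sum_Nsq_squared, of int] by (simp add: of_nat_diff)
  hence "int (Nsq 0) ^ 2 + int (p - 1) * int (Nsq 1) ^ 2 = int p * int q_div_p + (int p * int q_div_p - 1) * int q_div_p"
    using sum_Fp_Nsq[of "\<lambda>z. (int z) ^ 2"] by simp
  hence "(int q_div_p - (int p - 1) * g) ^ 2 + (int p - 1) * (int q_div_p + g) ^ 2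
      = int p * int q_div_p + (int p * int q_div_p - 1) * int q_div_p"
    using Nsq_1 Nsq_0 p_gt_1 by (simp add: of_nat_diff)
  hence "(int p - 1) * (int p * g ^ 2 - int q_div_p) = 0" by (simp add: algebra_simps power2_eq_square)
  thus ?thesis using p_gt_1 by simp
qed

lemma zeta_neq_1: "zeta p \<noteq> 1"
  using complex_root_unity_eq_1[of p 1] p_gt_1 unfolding zeta_def by simp

lemma zeta_power_p: "zeta p ^ p = 1"
proof -
  have "zeta p ^ p = exp (of_nat p * (2 * of_real pi * \<i> / of_nat p))"
    unfolding zeta_def by (rule exp_of_nat_mult[symmetric])
  also have "of_nat p * (2 * of_real pi * \<i> / of_nat p) = 2 * of_real pi * \<i>" using p_gt_1 by simp
  finally show ?thesis by simp
qed

lemma sum_zeta_powers: "(\<Sum>k<p. zeta p ^ k) = 0"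
  using geometric_sum[OF zeta_neq_1, of p] zeta_power_p by simp

definition Fp_index :: "'a \<Rightarrow> nat" where "Fp_index c = (THE k. k < p \<and> of_nat k = c)"

lemma Fp_index_of_nat: "k < p \<Longrightarrow> Fp_index (of_nat k) = k"
  unfolding Fp_index_def by (rule the_equality) (auto simp: of_nat_eq_iff_mod)

lemma trace_nat_eq_Fp_index: "trace_nat p m x = Fp_index (Tr x)"
  unfolding trace_nat_def Fp_index_def ..

lemma quad_char_eq_card_sqrt: "quad_char x = of_int (int (card {y::'a. y ^ 2 = x}) - 1)"
proof (cases "\<exists>y. y ^ 2 = x")
  case True
  then obtain r where r: "r ^ 2 = x" by blast
  show ?thesis
  proof (cases "x = 0")
    case False
    hence "r \<noteq> 0" using r by auto
    hence "card {y\<in>UNIV - {0}. y ^ 2 = r ^ 2} = 2" by (rule card_square_roots_nonzero)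
    moreover have "{y\<in>UNIV - {0}. y ^ 2 = r ^ 2} = {y. y ^ 2 = x}" using r False by auto
    ultimately show ?thesis using True False by (simp add: quad_char_def)
  qed (simp add: quad_char_def)
next
  case False
  hence "{y::'a. y ^ 2 = x} = {}" by auto
  thus ?thesis using False by (auto simp: quad_char_def)
qed

lemma sum_quad_char_trace_fibre:
  assumes "c \<in> Fp"
  shows "(\<Sum>x\<in>{x::'a. Tr x = c}. quad_char x) = of_int (int (Nsq c) - int q_div_p)"
proof -
  have "Nsq c = (\<Sum>x\<in>{x::'a. Tr x = c}. card {y\<in>{y. Tr (y ^ 2) = c}. y ^ 2 = x})"
    unfolding Nsq_def by (rule card_eq_sum_card_fibres) auto
  also have "\<dots> = (\<Sum>x\<in>{x::'a. Tr x = c}. card {y::'a. y ^ 2 = x})"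
    by (rule sum.cong[OF refl], rule arg_cong[where f=card]) auto
  finally have "int (Nsq c) = (\<Sum>x\<in>{x::'a. Tr x = c}. int (card {y::'a. y ^ 2 = x}))" by simp
  moreover have "(\<Sum>x\<in>{x::'a. Tr x = c}. (1::int)) = int q_div_p"
    using card_trace_fibre[OF assms] unfolding q_div_p_def by simp
  ultimately have "(\<Sum>x\<in>{x::'a. Tr x = c}. int (card {y::'a. y ^ 2 = x}) - 1) = int (Nsq c) - int q_div_p"
    by (simp add: sum_subtractf)
  hence "of_int (\<Sum>x\<in>{x::'a. Tr x = c}. int (card {y::'a. y ^ 2 = x}) - 1)
      = (of_int (int (Nsq c) - int q_div_p) :: complex)"
    by simp
  thus ?thesis unfolding quad_char_eq_card_sqrt of_int_sum by simp
qed

lemma gauss_quad_eq_sum_Fp: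
  "gauss_quad p m TYPE('a) = (\<Sum>k<p. zeta p ^ k * of_int (int (Nsq (of_nat k)) - int q_div_p))"
proof -
  let ?F = "\<lambda>x::'a. quad_char x * zeta p ^ trace_nat p m x"
  have "gauss_quad p m TYPE('a) = (\<Sum>x\<in>UNIV. ?F x)"
    unfolding gauss_quad_def by (rule sum.mono_neutral_left) (auto simp: quad_char_def)
  also have "\<dots> = (\<Sum>c\<in>Fp. \<Sum>x\<in>{x\<in>UNIV. Tr x = c}. ?F x)"
    by (rule sum.group[symmetric]) (auto simp: trace_in_Fp)
  also have "\<dots> = (\<Sum>c\<in>Fp. zeta p ^ Fp_index c * of_int (int (Nsq c) - int q_div_p))"
  proof (rule sum.cong[OF refl])
    fix c assume c: "c \<in> Fp"
    have "(\<Sum>x\<in>{x\<in>UNIV. Tr x = c}. ?F x) = zeta p ^ Fp_index c * (\<Sum>x\<in>{x::'a. Tr x = c}. quad_char x)"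
      by (simp add: sum_distrib_left trace_nat_eq_Fp_index mult.commute)
    thus "(\<Sum>x\<in>{x\<in>UNIV. Tr x = c}. ?F x) = zeta p ^ Fp_index c * of_int (int (Nsq c) - int q_div_p)"
      using sum_quad_char_trace_fibre[OF c] by simp
  qed
  also have "\<dots> = (\<Sum>k<p. zeta p ^ k * of_int (int (Nsq (of_nat k)) - int q_div_p))"
    unfolding Fp_eq_image_of_nat using inj_on_of_nat_below_p by (simp add: sum.reindex Fp_index_of_nat)
  finally show ?thesis .
qed

lemma gauss_quad_eq: "gauss_quad p m TYPE('a) = - of_int (int p * g)"
proof -
  let ?a = "\<lambda>k. zeta p ^ k * of_int (int (Nsq (of_nat k)) - int q_div_p)"
  have shift: "(\<Sum>k<p. f k) = f 0 + (\<Sum>k<p - 1. f (Suc k))" for f :: "nat \<Rightarrow> complex"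
    using sum.lessThan_Suc_shift[of f "p - 1"] p_gt_1 by simp
  have "gauss_quad p m TYPE('a) = ?a 0 + (\<Sum>k<p - 1. ?a (Suc k))"
    unfolding gauss_quad_eq_sum_Fp by (rule shift)
  also have "(\<Sum>k<p - 1. ?a (Suc k)) = of_int g * (\<Sum>k<p - 1. zeta p ^ Suc k)"
  proof -
    have "Nsq (of_nat (Suc k)) = Nsq 1" if "k < p - 1" for k
    proof -
      have "(of_nat (Suc k) :: 'a) \<noteq> 0" using that of_nat_eq_iff_mod[of "Suc k" 0] by simp
      thus ?thesis using Nsq_Fp_nonzero of_nat_in_Fp by blast
    qed
    thus ?thesis by (simp add: Nsq_1 sum_distrib_left mult.commute)
  qed
  also have "(\<Sum>k<p - 1. zeta p ^ Suc k) = - 1"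
    using sum_zeta_powers shift[of "\<lambda>k. zeta p ^ k"] by (simp add: eq_neg_iff_add_eq_0 add.commute)
  finally show ?thesis using Nsq_0 by (simp add: algebra_simps)
qed

section \<open>The weights of the codewords\<close>

definition D0 :: "('a \<times> 'a) set" where "D0 = {(x, y). Tr (x + y ^ (p ^ u + 1)) = 0}"

definition D0_ker :: "'a \<Rightarrow> 'a \<Rightarrow> ('a \<times> 'a) set" where
  "D0_ker a b = {(x, y). Tr (x + y ^ (p ^ u + 1)) = 0 \<and> Tr (a * x + b * y) = 0}"

lemma trace_D0_eq: "Tr (x + y ^ (p ^ u + 1)) = Tr x + Q y"
  unfolding Q_def by (simp add: trace_add)

lemma card_D0_fibre: "card {x::'a. Tr (x + y ^ (p ^ u + 1)) = 0} = q_div_p"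
proof -
  have "{x::'a. Tr (x + y ^ (p ^ u + 1)) = 0} = {x. Tr x = - Q y}"
    unfolding trace_D0_eq by (auto simp: eq_neg_iff_add_eq_0)
  thus ?thesis using card_trace_fibre[of "- Q y"] Fp_minus[OF trace_in_Fp]
    unfolding q_div_p_def Q_def by simp
qed

lemma card_D0: "card D0 = p ^ m * q_div_p"
  unfolding D0_def card_pairs_eq_sum card_D0_fibre using card_field by simp

lemma D1_eq: "D1 p m u = D0 - {(0, 0)}"
  unfolding D1_def D0_def by auto

lemma card_D1: "card (D1 p m u :: ('a \<times> 'a) set) = p ^ m * q_div_p - 1"
  unfolding D1_eq using card_D0 by (simp add: card_Diff_singleton D0_def)

lemma hweight_codeword: "hweight p m u (codeword p m u a b) = p ^ m * q_div_p - card (D0_ker a b)"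
proof -
  have "{z \<in> D1 p m u. codeword p m u a b z \<noteq> 0} = D0 - D0_ker a b"
    unfolding D1_eq codeword_def D0_def D0_ker_def D1_def by (auto split: if_splits)
  moreover have "D0_ker a b \<subseteq> D0" unfolding D0_ker_def D0_def by auto
  ultimately show ?thesis unfolding hweight_def using card_D0 by (simp add: card_Diff_subset)
qed

lemma card_D0_ker_not_Fp: assumes "a \<notin> Fp" shows "card (D0_ker a b) = q_div_p * q_div_p"
proof -
  have "card {x::'a. Tr (x + y ^ (p ^ u + 1)) = 0 \<and> Tr (a * x + b * y) = 0} = p ^ (m - 2)" for y
  proof -
    have "{x::'a. Tr (x + y ^ (p ^ u + 1)) = 0 \<and> Tr (a * x + b * y) = 0}
        = {x. Tr x = - Q y \<and> Tr (a * x) = - Tr (b * y)}"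
      unfolding trace_D0_eq by (auto simp: trace_add eq_neg_iff_add_eq_0)
    thus ?thesis using card_trace_pair_fibre[OF assms] Fp_minus trace_in_Fp unfolding Q_def by simp
  qed
  hence "card (D0_ker a b) = p ^ m * p ^ (m - 2)"
    unfolding D0_ker_def card_pairs_eq_sum using card_field by simp
  also have "\<dots> = q_div_p * q_div_p"
  proof -
    have "m + (m - 2) = (m - 1) + (m - 1)" using m_ge_2 by arith
    thus ?thesis unfolding q_div_p_def by (metis power_add)
  qed
  finally show ?thesis .
qed

text \<open>For \<open>a \<in> Fp\<close> the condition on \<open>x\<close> is \<open>Tr x = - Q y\<close>, which leaves \<open>a Q y = Tr (b y)\<close>.\<close>

lemma card_D0_ker_Fp:
  assumes "a \<in> Fp"
  shows "card (D0_ker a b) = card {y. a * Q y = Tr (b * y)} * q_div_p"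
proof -
  have row: "{x::'a. Tr (x + y ^ (p ^ u + 1)) = 0 \<and> Tr (a * x + b * y) = 0}
      = (if a * Q y = Tr (b * y) then {x. Tr x = - Q y} else {})" for y
  proof -
    have "Tr (a * x + b * y) = a * Tr x + Tr (b * y)" for x
      using trace_add trace_scale[OF assms] by simp
    moreover have "Tr (x + y ^ (p ^ u + 1)) = 0 \<longleftrightarrow> Tr x = - Q y" for x
      unfolding trace_D0_eq by (simp add: eq_neg_iff_add_eq_0)
    ultimately show ?thesis by auto
  qed
  have "card (D0_ker a b) = (\<Sum>y\<in>(UNIV::'a set). if a * Q y = Tr (b * y) then q_div_p else 0)"
    unfolding D0_ker_def card_pairs_eq_sum row
    using card_trace_fibre[of "- Q _"] Fp_minus[OF trace_in_Fp]
    by (intro sum.cong) (auto simp: q_div_p_def Q_def)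
  also have "\<dots> = card {y. a * Q y = Tr (b * y)} * q_div_p"
    using sum_if_eq_card_mult[of "UNIV::'a set"] by simp
  finally show ?thesis .
qed

definition L_inv :: "'a \<Rightarrow> 'a" where "L_inv = inv_into UNIV L"

lemma L_L_inv: "L (L_inv w) = w" unfolding L_inv_def using bij_L by (simp add: bij_is_surj surj_f_inv_f)
lemma L_inv_L: "L_inv (L w) = w" unfolding L_inv_def using inj_L by simp

text \<open>Completing the square: with \<open>a L z\<^sub>0 = - b\<close>, \<open>a Q (y + z\<^sub>0) = a Q y - Tr (b y) + a Q z\<^sub>0\<close>.\<close>

definition centre :: "'a \<Rightarrow> 'a \<Rightarrow> 'a" where "centre a b = L_inv (- b / a)"

lemma card_Q_eq_trace_linear:
  assumes "a \<in> Fp" "a \<noteq> 0"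
  shows "card {y. a * Q y = Tr (b * y)} = Nsq (Q (centre a b))"
proof -
  let ?z = "centre a b"
  have Lz: "a * L ?z = - b" unfolding centre_def L_L_inv using assms(2) by simp
  have "a * Tr (y * L ?z) = Tr (y * (a * L ?z))" for y
    using trace_scale[OF assms(1), of "y * L ?z"] by (simp add: ac_simps)
  hence complete: "a * Q (y + ?z) = a * Q y + a * Q ?z - Tr (b * y)" for y
    unfolding Q_add Lz by (simp add: algebra_simps trace_minus)
  have shifted: "a * Q y = Tr (b * y) \<longleftrightarrow> Q (y + ?z) = Q ?z" for y
  proof -
    have "Q (y + ?z) = Q ?z \<longleftrightarrow> a * Q (y + ?z) = a * Q ?z" using assms(2) by simp
    also have "\<dots> \<longleftrightarrow> a * Q y = Tr (b * y)" unfolding complete by (simp add: algebra_simps)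
    finally show ?thesis by simp
  qed
  have "{y. a * Q y = Tr (b * y)} = (\<lambda>y. y - ?z) ` {y. Q y = Q ?z}"
  proof (intro equalityI subsetI)
    fix y assume "y \<in> {y. a * Q y = Tr (b * y)}"
    hence "y + ?z \<in> {y. Q y = Q ?z}" "y = (y + ?z) - ?z" using shifted by auto
    thus "y \<in> (\<lambda>y. y - ?z) ` {y. Q y = Q ?z}" by (rule rev_image_eqI)
  qed (auto simp: shifted)
  hence "card {y. a * Q y = Tr (b * y)} = card {y. Q y = Q ?z}"
    by (simp add: card_image inj_on_def)
  thus ?thesis unfolding Nsq_def card_Q_fibre .
qed

definition wt :: "'a \<Rightarrow> 'a \<Rightarrow> nat" where "wt a b = hweight p m u (codeword p m u a b)"

definition w0 :: nat where "w0 = p ^ m * q_div_p - q_div_p * q_div_p"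
definition w1 :: nat where "w1 = p ^ m * q_div_p - q_div_p * Nsq 0"
definition w2 :: nat where "w2 = p ^ m * q_div_p - q_div_p * Nsq 1"

lemma wt_eq:
  "wt a b = (if a = 0 \<and> b = 0 then 0
             else if a \<in> Fp - {0} then (if Q (centre a b) = 0 then w1 else w2)
             else w0)"
proof -
  consider "a = 0" "b = 0" | "a = 0" "b \<noteq> 0" | "a \<in> Fp - {0}" | "a \<notin> Fp" by auto
  thus ?thesis
  proof cases
    case 1
    hence "D0_ker a b = D0" unfolding D0_ker_def D0_def by simp
    thus ?thesis using 1 unfolding wt_def hweight_codeword by (simp add: card_D0)
  next
    case 2
    have "{y::'a. 0 * Q y = Tr (b * y)} = {y. Tr (b * y) = 0}" by auto
    hence "card {y::'a. 0 * Q y = Tr (b * y)} = q_div_p"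
      using card_trace_scaled_fibre[OF 2(2) Fp_0] unfolding q_div_p_def by simp
    hence "card (D0_ker a b) = q_div_p * q_div_p" using 2 card_D0_ker_Fp[OF Fp_0] by simp
    thus ?thesis using 2 unfolding wt_def hweight_codeword w0_def by simp
  next
    case 3
    have "Nsq (Q z) = (if Q z = 0 then Nsq 0 else Nsq 1)" for z
      using Nsq_Fp_nonzero[OF trace_in_Fp] unfolding Q_def by auto
    moreover have "card (D0_ker a b) = Nsq (Q (centre a b)) * q_div_p"
      using 3 card_D0_ker_Fp card_Q_eq_trace_linear by simp
    ultimately show ?thesis using 3
      unfolding wt_def hweight_codeword w1_def w2_def by (simp add: mult.commute)
  next
    case 4
    thus ?thesis using Fp_0 unfolding wt_def hweight_codeword w0_def by (auto simp: card_D0_ker_not_Fp)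
  qed
qed

lemma Nsq_le: "Nsq c \<le> p ^ m"
  unfolding Nsq_def using card_mono[of "UNIV::'a set" "{y. Tr (y ^ 2) = c}"] card_field by simp

lemma int_w0: "int w0 = (int p - 1) * int q_div_p ^ 2"
proof -
  have "q_div_p * q_div_p \<le> p ^ m * q_div_p"
    using p_mult_q_div_p[symmetric] p_gt_1 by (intro mult_right_mono) simp_all
  thus ?thesis unfolding w0_def using p_mult_q_div_p[symmetric]
    by (simp add: of_nat_diff power2_eq_square algebra_simps)
qed

lemma int_w1: "int w1 = (int p - 1) * int q_div_p * (int q_div_p + g)"
proof -
  have "q_div_p * Nsq 0 \<le> p ^ m * q_div_p" using Nsq_le by (simp add: mult.commute)
  hence "int w1 = int (p ^ m * q_div_p) - int q_div_p * int (Nsq 0)" unfolding w1_def by (simp add: of_nat_diff)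
  thus ?thesis using Nsq_0 p_mult_q_div_p[symmetric] by (simp add: algebra_simps)
qed

lemma int_w2: "int w2 = int q_div_p * ((int p - 1) * int q_div_p - g)"
proof -
  have "q_div_p * Nsq 1 \<le> p ^ m * q_div_p" using Nsq_le by (simp add: mult.commute)
  hence "int w2 = int (p ^ m * q_div_p) - int q_div_p * int (Nsq 1)" unfolding w2_def by (simp add: of_nat_diff)
  thus ?thesis using Nsq_1 p_mult_q_div_p[symmetric] by (simp add: algebra_simps)
qed

text \<open>From \<open>p g\<^sup>2 = q_div_p\<close> and \<open>q_div_p \<ge> p\<close>: \<open>((p - 1) g)\<^sup>2 < q_div_p\<^sup>2\<close>.\<close>

lemma abs_pred_p_mult_g_less: "\<bar>(int p - 1) * g\<bar> < int q_div_p"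
proof -
  have "(int p - 1) ^ 2 < int p * int p" using p_gt_1 by (simp add: power2_eq_square algebra_simps)
  also have "\<dots> \<le> int p * int q_div_p" using q_div_p_ge_p by (intro mult_left_mono) auto
  finally have "(int p - 1) ^ 2 * int q_div_p < int p * int q_div_p * int q_div_p"
    using q_div_p_ge_p p_gt_1 by simp
  hence "int p * (((int p - 1) * g) ^ 2) < int p * (int q_div_p) ^ 2"
    using p_mult_g_squared by (simp add: power_mult_distrib power2_eq_square algebra_simps)
  hence "\<bar>(int p - 1) * g\<bar> ^ 2 < (int q_div_p) ^ 2" using p_gt_1 by simp
  thus ?thesis by (rule power2_less_imp_less) simp
qed

lemma abs_g_less: "\<bar>g\<bar> < int q_div_p"
proof -
  have "\<bar>g\<bar> \<le> \<bar>(int p - 1) * g\<bar>" using p_gt_1 by (simp add: abs_mult mult_le_cancel_right1)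
  thus ?thesis using abs_pred_p_mult_g_less by simp
qed

lemma weights_distinct: "w0 \<noteq> 0" "w1 \<noteq> 0" "w2 \<noteq> 0" "w0 \<noteq> w1" "w0 \<noteq> w2" "w1 \<noteq> w2"
proof -
  have p1: "int p - 1 > 0" using p_gt_1 by simp
  have P: "int q_div_p > 0" using q_div_p_ge_p p_gt_1 by simp
  have g_neq_0: "g \<noteq> 0" using p_mult_g_squared P by auto
  have "int q_div_p \<le> (int p - 1) * int q_div_p" using p1 P by simp
  hence "(int p - 1) * int q_div_p - g > 0" using abs_g_less by linarith
  hence "int w2 > 0" unfolding int_w2 using P by simp
  thus "w2 \<noteq> 0" by simp
  have "int w0 > 0" unfolding int_w0 using p1 P by simp
  thus "w0 \<noteq> 0" by simp
  have "int w1 > 0" unfolding int_w1 using p1 P abs_g_less by simp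
  thus "w1 \<noteq> 0" by simp
  have "int w1 - int w0 = (int p - 1) * int q_div_p * g" unfolding int_w0 int_w1 by (simp add: algebra_simps power2_eq_square)
  thus "w0 \<noteq> w1" using p1 P g_neq_0 by auto
  have "int w0 - int w2 = int q_div_p * g" unfolding int_w0 int_w2 by (simp add: algebra_simps power2_eq_square)
  thus "w0 \<noteq> w2" using P g_neq_0 by auto
  have "int w1 - int w2 = int p * int q_div_p * g" unfolding int_w1 int_w2 by (simp add: algebra_simps)
  thus "w1 \<noteq> w2" using P g_neq_0 p_gt_1 by auto
qed

lemma card_centre_preimage:
  assumes "a \<noteq> 0" shows "card {b. P (Q (centre a b))} = card {z. P (Q z)}"
proof -
  have "inj (centre a)"
  proof (rule injI)
    fix b b' assume "centre a b = centre a b'"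
    hence "- b / a = - b' / a" unfolding centre_def by (metis L_L_inv)
    thus "b = b'" using assms by simp
  qed
  moreover have "surj (centre a)"
    using assms by (intro surjI[of _ "\<lambda>z. - (a * L z)"]) (simp add: centre_def L_inv_L)
  ultimately have "card (centre a -` {z. P (Q z)}) = card {z. P (Q z)}"
    by (intro card_vimage_inj) auto
  thus ?thesis by (simp add: vimage_def)
qed

lemma card_pairs_Fp_centre:
  "card {(a, b). a \<in> Fp - {0} \<and> P (Q (centre a b))} = (p - 1) * card {z. P (Q z)}"
proof -
  have "{(a, b). a \<in> Fp - {0} \<and> P (Q (centre a b))} = (SIGMA a:Fp - {0}. {b. P (Q (centre a b))})"
    by auto
  hence "card {(a, b). a \<in> Fp - {0} \<and> P (Q (centre a b))} = (\<Sum>a\<in>Fp - {0}. card {b. P (Q (centre a b))})"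
    by (simp add: card_SigmaI)
  also have "\<dots> = (\<Sum>a\<in>Fp - {0}. card {z. P (Q z)})" by (rule sum.cong) (auto simp: card_centre_preimage)
  finally show ?thesis using card_Fp_nonzero by simp
qed

lemma card_Q_eq_0: "card {z::'a. Q z = 0} = Nsq 0" unfolding Nsq_def by (rule card_Q_fibre)

lemma card_Q_neq_0: "card {z::'a. Q z \<noteq> 0} = p ^ m - Nsq 0"
proof -
  have "{z::'a. Q z \<noteq> 0} = UNIV - {z. Q z = 0}" by auto
  thus ?thesis using card_Q_eq_0 card_field by (simp add: card_Diff_subset)
qed

lemma wt_eq_0_iff: "{(a, b). wt a b = 0} = {(0, 0)}"
  using weights_distinct by (auto simp: wt_eq split: if_splits)

lemma card_wt_eq_w1: "card {(a, b). wt a b = w1} = (p - 1) * Nsq 0"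
proof -
  have "{(a, b). wt a b = w1} = {(a, b). a \<in> Fp - {0} \<and> Q (centre a b) = 0}"
    using weights_distinct by (auto simp: wt_eq split: if_splits)
  thus ?thesis using card_pairs_Fp_centre[of "\<lambda>t. t = 0"] card_Q_eq_0 by simp
qed

lemma card_wt_eq_w2: "card {(a, b). wt a b = w2} = (p - 1) * (p ^ m - Nsq 0)"
proof -
  have "{(a, b). wt a b = w2} = {(a, b). a \<in> Fp - {0} \<and> Q (centre a b) \<noteq> 0}"
    using weights_distinct by (auto simp: wt_eq split: if_splits)
  thus ?thesis using card_pairs_Fp_centre[of "\<lambda>t. t \<noteq> 0"] card_Q_neq_0 by simp
qed

lemma range_wt: "range (\<lambda>(a, b). wt a b) = {0, w0, w1, w2}"
proof
  show "range (\<lambda>(a, b). wt a b) \<subseteq> {0, w0, w1, w2}" by (auto simp: wt_eq)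
  have "L 0 = 0" unfolding L_def using p_gt_1 by (simp add: power_0_left)
  hence "wt 1 0 = w1" using Fp_1 L_inv_L[of 0] by (simp add: wt_eq centre_def)
  moreover have "wt 1 (- L z) = w2" if "Q z \<noteq> 0" for z
    using that Fp_1 by (simp add: wt_eq centre_def L_inv_L)
  moreover obtain z where "Q z \<noteq> 0"
  proof -
    have "int (Nsq 0) < 2 * int q_div_p" using Nsq_0 abs_pred_p_mult_g_less by (simp add: abs_less_iff)
    also have "2 * int q_div_p \<le> int p * int q_div_p" using p_ge_3 by (intro mult_right_mono) auto
    finally have "Nsq 0 < p ^ m" using p_mult_q_div_p by (simp flip: of_nat_mult)
    hence "{z::'a. Q z \<noteq> 0} \<noteq> {}" using card_Q_neq_0 by (metis card.empty zero_less_diff less_irrefl)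
    thus ?thesis using that by auto
  qed
  moreover have "wt 0 0 = 0" "wt 0 1 = w0" by (simp_all add: wt_eq Fp_0)
  moreover have "wt a b \<in> range (\<lambda>(a, b). wt a b)" for a b
    by (metis (no_types) case_prod_conv rangeI)
  ultimately show "{0, w0, w1, w2} \<subseteq> range (\<lambda>(a, b). wt a b)" by (metis insert_subset empty_subsetI)
qed

lemma card_wt_eq_w0: "card {(a, b). wt a b = w0} + 1 + (p - 1) * p ^ m = p ^ (2 * m)"
proof -
  have "card (UNIV :: ('a \<times> 'a) set) = (\<Sum>w\<in>{0, w0, w1, w2}. card {x\<in>UNIV. (\<lambda>(a, b). wt a b) x = w})"
    by (rule card_eq_sum_card_fibres) (use range_wt in auto)
  also have "\<dots> = card {(a, b). wt a b = 0} + card {(a, b). wt a b = w0}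
      + card {(a, b). wt a b = w1} + card {(a, b). wt a b = w2}"
    using weights_distinct by (simp add: add.assoc case_prod_beta')
  finally have "p ^ m * p ^ m = 1 + card {(a, b). wt a b = w0} + (p - 1) * Nsq 0 + (p - 1) * (p ^ m - Nsq 0)"
    using wt_eq_0_iff card_wt_eq_w1 card_wt_eq_w2 card_field by (simp add: card_cartesian_product)
  moreover have "(p - 1) * Nsq 0 + (p - 1) * (p ^ m - Nsq 0) = (p - 1) * p ^ m"
    using Nsq_le by (simp add: add_mult_distrib2[symmetric])
  moreover have "p ^ (2 * m) = p ^ m * p ^ m" by (simp add: mult_2 power_add)
  ultimately show ?thesis by linarith
qed

section \<open>The weight distribution of the code\<close>

abbreviation code :: "('a \<times> 'a \<Rightarrow> 'a) set" where "code \<equiv> code_CD1 p m u"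

lemma inj_codeword: "inj (\<lambda>(a, b). codeword p m u a b :: 'a \<times> 'a \<Rightarrow> 'a)"
proof (rule injI, clarify)
  fix a b a' b' :: 'a
  assume eq: "codeword p m u a b = codeword p m u a' b'"
  have "codeword p m u (a - a') (b - b') (x, y) = 0" if "(x, y) \<in> D1 p m u" for x y
  proof -
    have "Tr (a * x + b * y) = Tr (a' * x + b' * y)"
      using fun_cong[OF eq, of "(x, y)"] that unfolding codeword_def by simp
    moreover have "(a - a') * x + (b - b') * y = (a * x + b * y) - (a' * x + b' * y)"
      by (simp add: algebra_simps)
    ultimately show ?thesis using that unfolding codeword_def by (simp add: trace_diff)
  qed
  hence "(a - a', b - b') \<in> {(a, b). wt a b = 0}" unfolding wt_def hweight_def by auto
  thus "a = a' \<and> b = b'" unfolding wt_eq_0_iff by simp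
qed

lemma card_code_filter: "card {c \<in> code. P (hweight p m u c)} = card {(a, b). P (wt a b)}"
proof -
  have "{c \<in> code. P (hweight p m u c)} = (\<lambda>(a, b). codeword p m u a b) ` {(a, b). P (wt a b)}"
    unfolding code_CD1_def wt_def by auto
  thus ?thesis using inj_codeword by (simp add: card_image inj_on_subset)
qed

lemma hweight_image_code: "hweight p m u ` code = {0, w0, w1, w2}"
proof -
  have "hweight p m u ` code = range (\<lambda>(a, b). wt a b)"
    unfolding code_CD1_def wt_def by (auto simp: image_iff)
  thus ?thesis using range_wt by simp
qed

lemma card_D1_eq: "card (D1 p m u :: ('a \<times> 'a) set) = p ^ (2 * m - 1) - 1"
proof -
  have "2 * m - 1 = m + (m - 1)" using m_pos by arith
  thus ?thesis unfolding card_D1 q_div_p_def by (simp add: power_add)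
qed

lemma card_code: "card code = p ^ (2 * m)"
  using card_code_filter[of "\<lambda>_. True"] card_field by (simp add: mult_2 power_add)

lemma card_nonzero_weights: "card (hweight p m u ` code - {0}) = 3"
  unfolding hweight_image_code using weights_distinct by auto

lemma card_code_weight_0: "card {c \<in> code. hweight p m u c = 0} = 1"
  using card_code_filter[of "\<lambda>w. w = 0"] wt_eq_0_iff by simp

lemma w0_eq: "w0 = (p - 1) * p ^ (2 * m - 2)"
proof -
  have "2 * m - 2 = (m - 1) + (m - 1)" using m_pos by arith
  hence "int ((p - 1) * p ^ (2 * m - 2)) = int w0"
    unfolding int_w0 q_div_p_def using p_gt_1 by (simp add: of_nat_diff power2_eq_square power_add)
  thus ?thesis by (simp only: of_nat_eq_iff)
qed

lemma card_code_weight_w0: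
  "complex_of_nat (card {c \<in> code. hweight p m u c = (p - 1) * p ^ (2 * m - 2)})
     = of_nat (p ^ (2 * m)) - 1 - of_nat (p - 1) * of_nat (p ^ m)"
proof -
  have "card {c \<in> code. hweight p m u c = (p - 1) * p ^ (2 * m - 2)} = card {(a, b). wt a b = w0}"
    using card_code_filter[of "\<lambda>w. w = w0"] w0_eq by simp
  moreover have "complex_of_nat (card {(a, b). wt a b = w0}) + 1 + of_nat (p - 1) * of_nat (p ^ m)
      = of_nat (p ^ (2 * m))"
    using arg_cong[OF card_wt_eq_w0, of complex_of_nat] by (simp only: of_nat_add of_nat_mult of_nat_1)
  ultimately show ?thesis unfolding eq_diff_eq by (simp only: ac_simps)
qed

text \<open>Naming the complex images of \<open>q_div_p\<close>, \<open>p\<close> and \<open>g\<close> keeps the simplifier from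
  rewriting inside the casts; all remaining identities are then identities of rational functions.\<close>

lemma complex_casts:
  obtains P pp gg :: complex where "P \<noteq> 0" "pp \<noteq> 0" "pp - 1 \<noteq> 0"
    "complex_of_nat (p ^ m) = pp * P" "gauss_quad p m TYPE('a) = - (pp * gg)"
    "complex_of_nat (p - 1) = pp - 1"
    "complex_of_nat ((p - 1) * p ^ (2 * m - 2)) = (pp - 1) * P ^ 2"
    "complex_of_nat ((p - 1) * p ^ (m - 1)) = (pp - 1) * P"
    "complex_of_nat (Nsq 0) = P - (pp - 1) * gg"
    "complex_of_nat w1 = (pp - 1) * P * (P + gg)"
    "complex_of_nat w2 = P * ((pp - 1) * P - gg)"
proof
  let ?P = "complex_of_nat q_div_p" and ?pp = "complex_of_nat p" and ?gg = "complex_of_int g"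
  have cp1: "complex_of_nat (p - 1) = ?pp - 1" using p_gt_1 by (simp add: of_nat_diff)
  show "?P \<noteq> 0" "?pp \<noteq> 0" "?pp - 1 \<noteq> 0" using q_div_p_ge_p p_gt_1 by auto
  show "complex_of_nat (p ^ m) = ?pp * ?P" using p_mult_q_div_p by (metis of_nat_mult)
  show "gauss_quad p m TYPE('a) = - (?pp * ?gg)" unfolding gauss_quad_eq by simp
  show "complex_of_nat (p - 1) = ?pp - 1" by (rule cp1)
  show "complex_of_nat ((p - 1) * p ^ (2 * m - 2)) = (?pp - 1) * ?P ^ 2"
    using w0_eq int_w0 by (metis of_int_of_nat_eq of_int_mult of_int_diff of_int_1 of_int_power)
  show "complex_of_nat ((p - 1) * p ^ (m - 1)) = (?pp - 1) * ?P"
    unfolding q_div_p_def using cp1 by simp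
  show "complex_of_nat (Nsq 0) = ?P - (?pp - 1) * ?gg"
    using arg_cong[OF Nsq_0, of "of_int :: int \<Rightarrow> complex"] by simp
  show "complex_of_nat w1 = (?pp - 1) * ?P * (?P + ?gg)"
    using arg_cong[OF int_w1, of "of_int :: int \<Rightarrow> complex"] by simp
  show "complex_of_nat w2 = ?P * ((?pp - 1) * ?P - ?gg)"
    using arg_cong[OF int_w2, of "of_int :: int \<Rightarrow> complex"] by simp
qed

lemma code_weight_w1:
  defines "G \<equiv> gauss_quad p m TYPE('a)" and "q \<equiv> complex_of_nat (p ^ m)"
  shows "\<exists>w. complex_of_nat w = of_nat ((p - 1) * p ^ (2 * m - 2)) * (1 - G / q) \<and>
           complex_of_nat (card {c \<in> code. hweight p m u c = w})
             = of_nat ((p - 1) * p ^ (m - 1)) * (1 + of_nat (p - 1) * G / q)"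
proof -
  obtain P pp gg where c: "P \<noteq> 0" "pp \<noteq> 0" "q = pp * P" "G = - (pp * gg)"
    "complex_of_nat (p - 1) = pp - 1"
    "complex_of_nat ((p - 1) * p ^ (2 * m - 2)) = (pp - 1) * P ^ 2"
    "complex_of_nat ((p - 1) * p ^ (m - 1)) = (pp - 1) * P"
    "complex_of_nat (Nsq 0) = P - (pp - 1) * gg"
    "complex_of_nat w1 = (pp - 1) * P * (P + gg)"
    unfolding G_def q_def by (rule complex_casts)
  have weight: "(pp - 1) * P * (P + gg) = (pp - 1) * P ^ 2 * (1 - G / q)"
    unfolding c(3,4) using c(1,2) by (simp add: field_simps power2_eq_square)
  have mult: "(pp - 1) * (P - (pp - 1) * gg) = (pp - 1) * P * (1 + (pp - 1) * G / q)"
    unfolding c(3,4) using c(1,2) by (simp add: field_simps)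
  have "complex_of_nat (card {c \<in> code. hweight p m u c = w1}) = of_nat (p - 1) * of_nat (Nsq 0)"
    using card_code_filter[of "\<lambda>w. w = w1"] card_wt_eq_w1 by simp
  also have "\<dots> = of_nat ((p - 1) * p ^ (m - 1)) * (1 + of_nat (p - 1) * G / q)"
    unfolding c(5,7,8) by (rule mult)
  finally have "complex_of_nat (card {c \<in> code. hweight p m u c = w1})
      = of_nat ((p - 1) * p ^ (m - 1)) * (1 + of_nat (p - 1) * G / q)" .
  moreover have "complex_of_nat w1 = of_nat ((p - 1) * p ^ (2 * m - 2)) * (1 - G / q)"
    by (simp only: c(6,9) weight)
  ultimately show ?thesis by blast
qed

lemma code_weight_w2:
  defines "G \<equiv> gauss_quad p m TYPE('a)" and "q \<equiv> complex_of_nat (p ^ m)"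
  shows "\<exists>w. complex_of_nat w = of_nat ((p - 1) * p ^ (2 * m - 2)) * (1 + G / (of_nat (p - 1) * q)) \<and>
           complex_of_nat (card {c \<in> code. hweight p m u c = w})
             = of_nat ((p - 1) * p ^ (m - 1)) * (of_nat (p - 1) - of_nat (p - 1) * G / q)"
proof -
  obtain P pp gg where c: "P \<noteq> 0" "pp \<noteq> 0" "pp - 1 \<noteq> 0" "q = pp * P" "G = - (pp * gg)"
    "complex_of_nat (p - 1) = pp - 1"
    "complex_of_nat ((p - 1) * p ^ (2 * m - 2)) = (pp - 1) * P ^ 2"
    "complex_of_nat ((p - 1) * p ^ (m - 1)) = (pp - 1) * P"
    "complex_of_nat (Nsq 0) = P - (pp - 1) * gg"
    "complex_of_nat w2 = P * ((pp - 1) * P - gg)"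
    unfolding G_def q_def by (rule complex_casts)
  have weight: "P * ((pp - 1) * P - gg) = (pp - 1) * P ^ 2 * (1 + G / ((pp - 1) * q))"
    unfolding c(4,5) using c(1-3) by (simp add: field_simps power2_eq_square)
  have mult: "(pp - 1) * (pp * P - (P - (pp - 1) * gg)) = (pp - 1) * P * ((pp - 1) - (pp - 1) * G / q)"
    unfolding c(4,5) using c(1,2) by (simp add: field_simps)
  have "complex_of_nat (card {c \<in> code. hweight p m u c = w2}) = of_nat (p - 1) * of_nat (p ^ m - Nsq 0)"
    using card_code_filter[of "\<lambda>w. w = w2"] card_wt_eq_w2 by simp
  also have "complex_of_nat (p ^ m - Nsq 0) = pp * P - (P - (pp - 1) * gg)"
    using Nsq_le c(4,9) unfolding q_def by (simp add: of_nat_diff)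
  also have "of_nat (p - 1) * (pp * P - (P - (pp - 1) * gg))
      = of_nat ((p - 1) * p ^ (m - 1)) * (of_nat (p - 1) - of_nat (p - 1) * G / q)"
    unfolding c(6,8) by (rule mult)
  finally have "complex_of_nat (card {c \<in> code. hweight p m u c = w2})
      = of_nat ((p - 1) * p ^ (m - 1)) * (of_nat (p - 1) - of_nat (p - 1) * G / q)" .
  moreover have "complex_of_nat w2 = of_nat ((p - 1) * p ^ (2 * m - 2)) * (1 + G / (of_nat (p - 1) * q))"
    by (simp only: c(6,7,10) weight)
  ultimately show ?thesis by blast
qed

end

theorem theorem2:
  fixes p m u v :: nat
    and F :: "'a::{finite,field} itself"
  assumes "prime p" and "odd p" and "m > 0" and "u > 0"
    and "CARD('a) = p ^ m"
    and "v = gcd m u"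
    and "odd (m div v)" and "even v"
  defines "G \<equiv> gauss_quad p m (TYPE('a))"
    and "q \<equiv> complex_of_nat (p ^ m)"
    and "C \<equiv> (code_CD1 p m u :: ('a \<times> 'a \<Rightarrow> 'a) set)"
  shows "card (D1 p m u :: ('a \<times> 'a) set) = p ^ (2 * m - 1) - 1
    \<and> card C = p ^ (2 * m)
    \<and> card (hweight p m u ` C - {0}) = 3
    \<and> card {c \<in> C. hweight p m u c = 0} = 1
    \<and> complex_of_nat (card {c \<in> C. hweight p m u c = (p - 1) * p ^ (2 * m - 2)})
           = of_nat (p ^ (2 * m)) - 1 - of_nat (p - 1) * of_nat (p ^ m)
    \<and> (\<exists>w. complex_of_nat w = of_nat ((p - 1) * p ^ (2 * m - 2)) * (1 - G / q) \<and>
           complex_of_nat (card {c \<in> C. hweight p m u c = w})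
             = of_nat ((p - 1) * p ^ (m - 1)) * (1 + of_nat (p - 1) * G / q))
    \<and> (\<exists>w. complex_of_nat w = of_nat ((p - 1) * p ^ (2 * m - 2)) * (1 + G / (of_nat (p - 1) * q)) \<and>
           complex_of_nat (card {c \<in> C. hweight p m u c = w})
             = of_nat ((p - 1) * p ^ (m - 1)) * (of_nat (p - 1) - of_nat (p - 1) * G / q))"
proof -
  interpret three_weight_code p m "TYPE('a)" u v
    using assms by unfold_locales auto
  show ?thesis
    unfolding G_def q_def C_def
    using card_D1_eq card_code card_nonzero_weights card_code_weight_0 card_code_weight_w0
      code_weight_w1 code_weight_w2
    by blast
qed

end
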